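(* Let $n\ge1$ and let $S\subset[2n]$ be a signature in $[2n]$ with associated vector $(s(1),\dots,s(2n))$. Then the number of primary even-odd-descent permutations $\sigma\in\mathcal{X}_{2n}$ whose set of descent tops together with descent bottoms equals $S$ is $\prod_{i=1}^{2n} s(i)$.
   Context: For $\sigma\in\mathfrak{S}_m$, a descent is an index $i$ with $\sigma_i>\sigma_{i+1}$; $\sigma_i$ is a descent top and $\sigma_{i+1}$ a descent bottom. $\mathcal{X}_{2n}$ is the set of permutations of $[2n]$ in which every descent has even top and odd bottom. $\sigma\in\mathcal{X}_{2n}$ is primary even-odd-descent if for every descent top $t$ and every descent bottom $b$ of $\sigma$, $t>b$ implies $t-b\ge3$. A set $S\subseteq[2n]$ is a signature in $[2n]$ if: (i) $S$ has $k$ odd and $k$ even elements for some $k\ge0$; (ii) for each $j\in[n]$ at most one of $2j-1,2j$ lies in $S$; (iii) for every $i\in[2n]$, $S\cap\{1,\dots,i\}$ has at least as many odd as even elements. For $i\in[2n]$ let $f(i)$ (resp. $g(i)$) be the number of odd (resp. even) elements of $S$ less than $i$; the associated vector is $s(i)=f(i)-g(i)$ if $i\in S$ is even, and $s(i)=f(i)-g(i)+1$ otherwise (i.e., if $i\in S$ is odd or $i\notin S$). *)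

theory Defs
  imports "HOL-Combinatorics.Permutations"
begin

text \<open>Permutations of [m] = {1..m} are functions nat => nat permuting {1..m};
  sigma i is the entry at position i.\<close>

definition descents :: "(nat \<Rightarrow> nat) \<Rightarrow> nat \<Rightarrow> nat set" where
  "descents \<sigma> m = {i. 1 \<le> i \<and> i < m \<and> \<sigma> (Suc i) < \<sigma> i}"

definition desc_tops :: "(nat \<Rightarrow> nat) \<Rightarrow> nat \<Rightarrow> nat set" where
  "desc_tops \<sigma> m = \<sigma> ` descents \<sigma> m"

definition desc_bottoms :: "(nat \<Rightarrow> nat) \<Rightarrow> nat \<Rightarrow> nat set" where
  "desc_bottoms \<sigma> m = (\<lambda>i. \<sigma> (Suc i)) ` descents \<sigma> m"

definition X_set :: "nat \<Rightarrow> (nat \<Rightarrow> nat) set" where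
  "X_set n = {\<sigma>. \<sigma> permutes {1..2*n} \<and>
      (\<forall>i\<in>descents \<sigma> (2*n). even (\<sigma> i) \<and> odd (\<sigma> (Suc i)))}"

definition primary_eod :: "nat \<Rightarrow> (nat \<Rightarrow> nat) \<Rightarrow> bool" where
  "primary_eod n \<sigma> \<longleftrightarrow> \<sigma> \<in> X_set n \<and>
     (\<forall>t\<in>desc_tops \<sigma> (2*n). \<forall>b\<in>desc_bottoms \<sigma> (2*n). t > b \<longrightarrow> t - b \<ge> 3)"

definition is_signature :: "nat \<Rightarrow> nat set \<Rightarrow> bool" where
  "is_signature n S \<longleftrightarrow> S \<subseteq> {1..2*n} \<and>
     card {x\<in>S. odd x} = card {x\<in>S. even x} \<and>
     (\<forall>j\<in>{1..n}. \<not> (2*j - 1 \<in> S \<and> 2*j \<in> S)) \<and>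
     (\<forall>i\<in>{1..2*n}. card {x\<in>S. x \<le> i \<and> even x} \<le> card {x\<in>S. x \<le> i \<and> odd x})"

definition sig_f :: "nat set \<Rightarrow> nat \<Rightarrow> int" where
  "sig_f S i = int (card {x\<in>S. odd x \<and> x < i})"

definition sig_g :: "nat set \<Rightarrow> nat \<Rightarrow> int" where
  "sig_g S i = int (card {x\<in>S. even x \<and> x < i})"

definition sig_vec :: "nat set \<Rightarrow> nat \<Rightarrow> int" where
  "sig_vec S i = (if i \<in> S \<and> even i then sig_f S i - sig_g S i
                  else sig_f S i - sig_g S i + 1)"

end

(*
  Insert the values 1, ..., 2n in increasing order into a growing word.  A descent is
  completed when its top is inserted, so its bottom has to be placed earlier, preceded
  by a slot that is later filled by the top.  When M is inserted, the open slots are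
  those of the odd elements of S below M whose tops are still missing: there are
  f(M) - g(M) of them.  If M is not in S, it goes at the end or immediately before a
  slot; if M is odd and in S, it goes at one of these places preceded by a new slot;
  if M is even and in S, it fills one of the slots.  Each case leaves exactly s(M)
  choices, which gives the product.  Primarity is automatic for a signature, since a
  descent with t - b = 1 would put both 2j - 1 and 2j into S.
*)

theory Submission
  imports Defs
begin

section \<open>Partial words\<close>

fun entries :: "nat option list \<Rightarrow> nat list" where
  "entries [] = []"
| "entries (None # u) = entries u"
| "entries (Some a # u) = a # entries u"

fun admissible_pair :: "nat option \<Rightarrow> nat option \<Rightarrow> bool" where
  "admissible_pair None None = False"
| "admissible_pair None (Some b) = odd b"
| "admissible_pair (Some a) None = True"
| "admissible_pair (Some a) (Some b) = (b < a \<longrightarrow> even a \<and> odd b)"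

fun pair_marks :: "nat option \<Rightarrow> nat option \<Rightarrow> nat set" where
  "pair_marks None (Some b) = {b}"
| "pair_marks (Some a) (Some b) = (if b < a then {a, b} else {})"
| "pair_marks _ _ = {}"

fun marks :: "nat option list \<Rightarrow> nat set" where
  "marks (x # y # u) = pair_marks x y \<union> marks (y # u)"
| "marks _ = {}"

definition excess :: "nat set \<Rightarrow> int" where
  "excess S = int (card {x\<in>S. odd x}) - int (card {x\<in>S. even x})"

text \<open>A partial word lists the values 1, ..., m placed so far, with \<^const>\<open>None\<close> marking a slot
  reserved for an even descent top larger than m; this is why \<^term>\<open>pair_marks None (Some b)\<close>
  already records b as a descent bottom.\<close>

definition partial_words :: "nat \<Rightarrow> nat set \<Rightarrow> nat option list set" where
  "partial_words m S = {u. distinct (entries u) \<and> set (entries u) = {1..m}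
     \<and> int (count_list u None) = excess S \<and> successively admissible_pair u
     \<and> (u \<noteq> [] \<longrightarrow> last u \<noteq> None) \<and> marks u = S}"

lemma entries_append [simp]: "entries (xs @ ys) = entries xs @ entries ys"
  by (induction xs rule: entries.induct) auto

lemma Some_in_set_iff_in_entries: "Some a \<in> set u \<longleftrightarrow> a \<in> set (entries u)"
  by (induction u rule: entries.induct) auto

lemma length_entries: "length u = length (entries u) + count_list u None"
  by (induction u rule: entries.induct) auto

lemma entries_map_Some [simp]: "entries (map Some w) = w"
  by (induction w) auto

lemma map_Some_entries: "count_list u None = 0 \<Longrightarrow> map Some (entries u) = u"
  by (induction u rule: entries.induct) auto

lemma marks_subset_entries: "marks u \<subseteq> set (entries u)"
proof (induction u rule: marks.induct)
  case (1 x y u)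
  then show ?case by (cases x; cases y) auto
qed auto

lemma marks_Cons: "marks (x # u) = marks u \<union> (if u = [] then {} else pair_marks x (hd u))"
  by (cases u) auto

lemma marks_append:
  "marks (xs @ ys) = marks xs \<union> marks ys \<union>
     (if xs = [] \<or> ys = [] then {} else pair_marks (last xs) (hd ys))"
proof (induction xs rule: induct_list012)
  case (2 x)
  then show ?case by (cases ys) auto
qed auto

lemma marks_conv_nth: "z \<in> marks u \<longleftrightarrow> (\<exists>j. Suc j < length u \<and> z \<in> pair_marks (u ! j) (u ! Suc j))"
proof (induction u rule: marks.induct)
  case (1 x y u)
  show ?case
  proof
    assume "z \<in> marks (x # y # u)"
    then consider "z \<in> pair_marks x y" | "z \<in> marks (y # u)"
      by auto
    then show "\<exists>j. Suc j < length (x # y # u) \<and> z \<in> pair_marks ((x # y # u) ! j) ((x # y # u) ! Suc j)"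
    proof cases
      case 1
      then show ?thesis
        by (intro exI[of _ 0]) simp
    next
      case 2
      then obtain j where "Suc j < length (y # u)" "z \<in> pair_marks ((y # u) ! j) ((y # u) ! Suc j)"
        using "1.IH" by blast
      then show ?thesis
        by (intro exI[of _ "Suc j"]) simp
    qed
  next
    assume "\<exists>j. Suc j < length (x # y # u) \<and> z \<in> pair_marks ((x # y # u) ! j) ((x # y # u) ! Suc j)"
    then obtain j where "Suc j < length (x # y # u)" "z \<in> pair_marks ((x # y # u) ! j) ((x # y # u) ! Suc j)"
      by blast
    then show "z \<in> marks (x # y # u)"
      using "1.IH" by (cases j) auto
  qed
qed auto

lemma finite_partial_words: "finite (partial_words m S)"
proof (rule finite_subset)
  show "partial_words m S \<subseteq> {u. set u \<subseteq> insert None (Some ` {1..m}) \<and> length u \<le> m + nat (excess S)}"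
  proof clarify
    fix u assume u: "u \<in> partial_words m S"
    then have "length (entries u) = m"
      using distinct_card[of "entries u"] by (auto simp: partial_words_def)
    then have "length u \<le> m + nat (excess S)"
      using u length_entries[of u] by (auto simp: partial_words_def)
    moreover have "set u \<subseteq> insert None (Some ` {1..m})"
    proof
      fix x assume x: "x \<in> set u"
      have "set (entries u) = {1..m}"
        using u by (simp add: partial_words_def)
      with x show "x \<in> insert None (Some ` {1..m})"
        by (cases x rule: option.exhaust) (auto simp: Some_in_set_iff_in_entries)
    qed
    ultimately show "set u \<subseteq> insert None (Some ` {1..m}) \<and> length u \<le> m + nat (excess S)"
      by blast
  qed
qed (rule finite_lists_length_le, auto)

lemma last_Some_before_slot:
  assumes "u \<in> partial_words m S" "u = xs @ ys" "ys = [] \<or> hd ys = None" "xs \<noteq> []"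
  obtains a where "last xs = Some a" "a \<le> m"
proof (cases "last xs")
  case None
  have "successively admissible_pair u" "u \<noteq> [] \<longrightarrow> last u \<noteq> None"
    using assms(1) by (auto simp: partial_words_def)
  then show ?thesis
    using assms(2-4) None by (auto simp: successively_append_iff)
next
  case (Some a)
  then have "a \<in> set (entries u)"
    using assms(2,4) last_in_set Some_in_set_iff_in_entries by fastforce
  then show ?thesis
    using assms(1) Some that by (auto simp: partial_words_def)
qed

lemma excess_insert:
  assumes "finite S" "M \<notin> S"
  shows "excess (insert M S) = excess S + (if odd M then 1 else -1)"
proof -
  have "{x \<in> insert M S. P x} = (if P M then insert M {x\<in>S. P x} else {x\<in>S. P x})" for P
    by auto
  then show ?thesis
    using assms by (simp add: excess_def)
qed

lemma finite_marks: "finite (marks u)"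
  using marks_subset_entries finite_subset by blast

section \<open>Inserting and removing the largest value\<close>

lemma insert_unmarked_local:
  assumes "xs = [] \<or> (\<exists>a. last xs = Some a \<and> a < M)" "ys = [] \<or> hd ys = None"
  shows "successively admissible_pair (xs @ Some M # ys) \<longleftrightarrow> successively admissible_pair (xs @ ys)"
    and "marks (xs @ Some M # ys) = marks (xs @ ys)"
  using assms by (auto simp: successively_append_iff successively_Cons marks_append marks_Cons)

lemma insert_odd_local:
  assumes "xs = [] \<or> (\<exists>a. last xs = Some a \<and> a < M)" "ys = [] \<or> hd ys = None" "odd M"
  shows "successively admissible_pair (xs @ None # Some M # ys) \<longleftrightarrow>
      successively admissible_pair (xs @ ys)"
    and "marks (xs @ None # Some M # ys) = insert M (marks (xs @ ys))"
  using assms by (auto simp: successively_append_iff successively_Cons marks_append marks_Cons)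

lemma fill_slot_local:
  assumes "xs = [] \<or> (\<exists>a. last xs = Some a \<and> a < M)" "ys = Some b # ys'" "b < M" "odd b" "even M"
  shows "successively admissible_pair (xs @ Some M # ys) \<longleftrightarrow>
      successively admissible_pair (xs @ None # ys)"
    and "marks (xs @ Some M # ys) = insert M (marks (xs @ None # ys))"
  using assms by (auto simp: successively_append_iff marks_append)

lemma insert_unmarked_max:
  assumes u: "u \<in> partial_words m S" "u = xs @ ys" "ys = [] \<or> hd ys = None"
    and "Suc m \<notin> S"
  shows "xs @ Some (Suc m) # ys \<in> partial_words (Suc m) S"
proof -
  have "xs = [] \<or> (\<exists>a. last xs = Some a \<and> a < Suc m)"
    using last_Some_before_slot[OF u] by (metis less_Suc_eq_le)
  note block = insert_unmarked_local[OF this u(3)]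
  have "Suc m \<notin> set (entries u)"
    using u by (auto simp: partial_words_def)
  then show ?thesis
    using u block by (auto simp: partial_words_def)
qed

lemma insert_odd_max_with_slot:
  assumes u: "u \<in> partial_words m S" "u = xs @ ys" "ys = [] \<or> hd ys = None"
    and "odd (Suc m)" "Suc m \<notin> S"
  shows "xs @ None # Some (Suc m) # ys \<in> partial_words (Suc m) (insert (Suc m) S)"
proof -
  have "xs = [] \<or> (\<exists>a. last xs = Some a \<and> a < Suc m)"
    using last_Some_before_slot[OF u] by (metis less_Suc_eq_le)
  note block = insert_odd_local[OF this u(3) assms(4)]
  have "excess (insert (Suc m) S) = excess S + 1"
    using excess_insert[of S "Suc m"] finite_marks[of u] u(1) assms(4,5)
    by (simp add: partial_words_def)
  moreover have "Suc m \<notin> set (entries u)"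
    using u by (auto simp: partial_words_def)
  ultimately show ?thesis
    using u block by (auto simp: partial_words_def)
qed

lemma fill_slot_even_max:
  assumes u: "u \<in> partial_words m S" "u = xs @ None # ys"
    and "even (Suc m)" "Suc m \<notin> S"
  shows "xs @ Some (Suc m) # ys \<in> partial_words (Suc m) (insert (Suc m) S)"
proof -
  have "successively admissible_pair u" "u \<noteq> [] \<longrightarrow> last u \<noteq> None"
    using u(1) by (auto simp: partial_words_def)
  then obtain b ys' where right: "ys = Some b # ys'" "odd b"
    using u(2) by (cases ys; cases "hd ys") (auto simp: successively_append_iff)
  have "b \<in> set (entries u)"
    using u(2) right by simp
  then have "b < Suc m"
    using u(1) by (auto simp: partial_words_def)
  have "xs = [] \<or> (\<exists>a. last xs = Some a \<and> a < Suc m)"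
    using last_Some_before_slot[OF u(1,2)] by (metis less_Suc_eq_le list.sel(1))
  note block = fill_slot_local[OF this right(1) \<open>b < Suc m\<close> right(2) assms(3)]
  have "excess (insert (Suc m) S) = excess S - 1"
    using excess_insert[of S "Suc m"] finite_marks[of u] u(1) assms(3,4)
    by (simp add: partial_words_def)
  moreover have "Suc m \<notin> set (entries u)"
    using u by (auto simp: partial_words_def)
  ultimately show ?thesis
    using u block right by (auto simp: partial_words_def)
qed

lemma split_at_max:
  assumes "w \<in> partial_words (Suc m) S"
  obtains xs ys where "w = xs @ Some (Suc m) # ys"
    "distinct (entries (xs @ ys))" "set (entries (xs @ ys)) = {1..m}"
proof -
  have w: "distinct (entries w)" "set (entries w) = {1..Suc m}"
    using assms by (auto simp: partial_words_def)
  then have "Some (Suc m) \<in> set w"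
    by (simp add: Some_in_set_iff_in_entries)
  then obtain xs ys where split: "w = xs @ Some (Suc m) # ys"
    by (meson split_list)
  then have "set (entries (xs @ ys)) = {1..Suc m} - {Suc m}"
    using w by auto
  also have "\<dots> = {1..m}"
    by auto
  finally show ?thesis
    using that split w by simp
qed

lemma neighbours_of_max:
  assumes "set (entries (xs @ ys)) = {1..m}"
  shows "xs \<noteq> [] \<Longrightarrow> last xs = None \<or> (\<exists>a. last xs = Some a \<and> a < Suc m)"
    and "ys \<noteq> [] \<Longrightarrow> hd ys = None \<or> (\<exists>b. hd ys = Some b \<and> b < Suc m)"
proof -
  have below: "a < Suc m" if "Some a \<in> set (xs @ ys)" for a
    using that assms Some_in_set_iff_in_entries[of a "xs @ ys"] by auto
  show "xs \<noteq> [] \<Longrightarrow> last xs = None \<or> (\<exists>a. last xs = Some a \<and> a < Suc m)"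
    using below[of "the (last xs)"] last_in_set[of xs] by (cases "last xs") auto
  show "ys \<noteq> [] \<Longrightarrow> hd ys = None \<or> (\<exists>b. hd ys = Some b \<and> b < Suc m)"
    using below[of "the (hd ys)"] hd_in_set[of ys] by (cases "hd ys") auto
qed

lemma remove_unmarked_max:
  assumes w: "w \<in> partial_words (Suc m) S" and "Suc m \<notin> S"
  obtains xs ys where "w = xs @ Some (Suc m) # ys" "xs @ ys \<in> partial_words m S"
    "ys = [] \<or> hd ys = None"
proof -
  obtain xs ys where split: "w = xs @ Some (Suc m) # ys"
    and entries: "distinct (entries (xs @ ys))" "set (entries (xs @ ys)) = {1..m}"
    using split_at_max[OF w] by blast
  have "marks w = S"
    using w by (simp add: partial_words_def)
  then have "xs \<noteq> [] \<longrightarrow> pair_marks (last xs) (Some (Suc m)) \<subseteq> S"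
    and "ys \<noteq> [] \<longrightarrow> pair_marks (Some (Suc m)) (hd ys) \<subseteq> S"
    using split by (auto simp: marks_append marks_Cons)
  then have left: "xs = [] \<or> (\<exists>a. last xs = Some a \<and> a < Suc m)"
    and right: "ys = [] \<or> hd ys = None"
    using neighbours_of_max[OF entries(2)] \<open>Suc m \<notin> S\<close> by fastforce+
  note block = insert_unmarked_local[OF left right]
  have "xs @ ys \<in> partial_words m S"
    using w split entries block left by (auto simp: partial_words_def last_append)
  then show ?thesis
    using that split right by blast
qed

lemma odd_max_after_slot:
  assumes w: "w \<in> partial_words (Suc m) (insert (Suc m) S)" and "odd (Suc m)"
  obtains xs ys where "w = xs @ None # Some (Suc m) # ys"
    "distinct (entries (xs @ ys))" "set (entries (xs @ ys)) = {1..m}"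
    "xs = [] \<or> (\<exists>a. last xs = Some a \<and> a < Suc m)" "ys = [] \<or> hd ys = None"
proof -
  obtain xs0 ys where split: "w = xs0 @ Some (Suc m) # ys"
    and entries: "distinct (entries (xs0 @ ys))" "set (entries (xs0 @ ys)) = {1..m}"
    using split_at_max[OF w] by blast
  have adm: "successively admissible_pair w"
    using w by (simp add: partial_words_def)
  have right: "ys = [] \<or> hd ys = None"
  proof (cases ys)
    case (Cons y ys')
    then have "admissible_pair (Some (Suc m)) y"
      using adm split by (simp add: successively_append_iff)
    then show ?thesis
      using neighbours_of_max(2)[OF entries(2)] Cons \<open>odd (Suc m)\<close> by auto
  qed simp
  have "Suc m \<notin> set (entries (xs0 @ ys))"
    using entries(2) by simp
  then have "Suc m \<notin> marks xs0 \<union> marks ys"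
    using marks_subset_entries[of xs0] marks_subset_entries[of ys] by auto
  moreover have "Suc m \<in> marks w"
    using w by (simp add: partial_words_def)
  ultimately have "xs0 \<noteq> [] \<and> Suc m \<in> pair_marks (last xs0) (Some (Suc m))"
    using split right by (auto simp: marks_append marks_Cons split: if_splits)
  then have "xs0 \<noteq> [] \<and> last xs0 = None"
    using neighbours_of_max(1)[OF entries(2)] by auto
  then obtain xs where xs0: "xs0 = xs @ [None]"
    by (metis append_butlast_last_id)
  have left: "xs = [] \<or> (\<exists>a. last xs = Some a \<and> a < Suc m)"
  proof (cases "xs = []")
    case False
    then have "admissible_pair (last xs) None"
      using adm split xs0 by (simp add: successively_append_iff)
    moreover have "set (entries (xs @ ys)) = {1..m}"
      using entries(2) xs0 by simp
    note neighbours_of_max(1)[OF this False]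
    ultimately show ?thesis
      by auto
  qed simp
  show ?thesis
    using that split xs0 entries left right by simp
qed

lemma remove_odd_max:
  assumes w: "w \<in> partial_words (Suc m) (insert (Suc m) S)" and "odd (Suc m)" "Suc m \<notin> S"
  obtains xs ys where "w = xs @ None # Some (Suc m) # ys" "xs @ ys \<in> partial_words m S"
    "ys = [] \<or> hd ys = None"
proof -
  obtain xs ys where split: "w = xs @ None # Some (Suc m) # ys"
    and entries: "distinct (entries (xs @ ys))" "set (entries (xs @ ys)) = {1..m}"
    and left: "xs = [] \<or> (\<exists>a. last xs = Some a \<and> a < Suc m)" and right: "ys = [] \<or> hd ys = None"
    using odd_max_after_slot[OF w \<open>odd (Suc m)\<close>] by blast
  note block = insert_odd_local[OF left right \<open>odd (Suc m)\<close>]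
  have "Suc m \<notin> marks (xs @ ys)"
    using entries marks_subset_entries[of "xs @ ys"] by auto
  then have "marks (xs @ ys) = S"
    using block(2) split w \<open>Suc m \<notin> S\<close> by (simp add: partial_words_def insert_ident)
  moreover have "excess (insert (Suc m) S) = excess S + 1"
    using excess_insert[OF _ \<open>Suc m \<notin> S\<close>] finite_marks \<open>marks (xs @ ys) = S\<close> \<open>odd (Suc m)\<close>
    by auto
  ultimately have "xs @ ys \<in> partial_words m S"
    using w split entries block left by (auto simp: partial_words_def last_append)
  then show ?thesis
    using that split right by simp
qed

lemma even_max_before_odd:
  assumes w: "w \<in> partial_words (Suc m) (insert (Suc m) S)" and "even (Suc m)"
  obtains xs b ys where "w = xs @ Some (Suc m) # Some b # ys"
    "distinct (entries (xs @ Some b # ys))" "set (entries (xs @ Some b # ys)) = {1..m}"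
    "xs = [] \<or> (\<exists>a. last xs = Some a \<and> a < Suc m)" "b < Suc m" "odd b"
proof -
  obtain xs ys where split: "w = xs @ Some (Suc m) # ys"
    and entries: "distinct (entries (xs @ ys))" "set (entries (xs @ ys)) = {1..m}"
    using split_at_max[OF w] by blast
  have adm: "successively admissible_pair w"
    using w by (simp add: partial_words_def)
  have left: "xs = [] \<or> (\<exists>a. last xs = Some a \<and> a < Suc m)"
  proof (cases "xs = []")
    case False
    then have "admissible_pair (last xs) (Some (Suc m))"
      using adm split by (simp add: successively_append_iff)
    then show ?thesis
      using neighbours_of_max(1)[OF entries(2)] False \<open>even (Suc m)\<close> by auto
  qed simp
  have "Suc m \<notin> set (entries (xs @ ys))"
    using entries(2) by simp
  then have "Suc m \<notin> marks xs \<union> marks ys"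
    using marks_subset_entries[of xs] marks_subset_entries[of ys] by auto
  moreover have "Suc m \<in> marks w"
    using w by (simp add: partial_words_def)
  ultimately have "ys \<noteq> [] \<and> Suc m \<in> pair_marks (Some (Suc m)) (hd ys)"
    using split left by (auto simp: marks_append marks_Cons split: if_splits)
  then obtain b ys' where right: "ys = Some b # ys'" "b < Suc m"
    using neighbours_of_max(2)[OF entries(2)] by (cases ys) auto
  moreover have "odd b"
    using adm split right \<open>even (Suc m)\<close> by (auto simp: successively_append_iff)
  ultimately show ?thesis
    using that split entries left by simp
qed

lemma remove_even_max:
  assumes w: "w \<in> partial_words (Suc m) (insert (Suc m) S)" and "even (Suc m)" "Suc m \<notin> S"
  obtains xs ys where "w = xs @ Some (Suc m) # ys" "xs @ None # ys \<in> partial_words m S"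
proof -
  obtain xs b ys where split: "w = xs @ Some (Suc m) # Some b # ys"
    and entries: "distinct (entries (xs @ Some b # ys))" "set (entries (xs @ Some b # ys)) = {1..m}"
    and left: "xs = [] \<or> (\<exists>a. last xs = Some a \<and> a < Suc m)" and "b < Suc m" "odd b"
    using even_max_before_odd[OF w \<open>even (Suc m)\<close>] by blast
  note block = fill_slot_local[OF left refl \<open>b < Suc m\<close> \<open>odd b\<close> \<open>even (Suc m)\<close>]
  have "Suc m \<notin> marks (xs @ None # Some b # ys)"
    using entries(2) marks_subset_entries[of "xs @ None # Some b # ys"] by auto
  then have "marks (xs @ None # Some b # ys) = S"
    using block(2) split w \<open>Suc m \<notin> S\<close> by (simp add: partial_words_def insert_ident)
  moreover have "excess (insert (Suc m) S) = excess S - 1"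
    using excess_insert[OF _ \<open>Suc m \<notin> S\<close>] finite_marks \<open>marks (xs @ None # Some b # ys) = S\<close>
      \<open>even (Suc m)\<close>
    by auto
  ultimately have "xs @ None # Some b # ys \<in> partial_words m S"
    using w split entries block by (auto simp: partial_words_def)
  then show ?thesis
    using that split by simp
qed

section \<open>Counting partial words\<close>

lemma card_image_Sigma_const:
  assumes "finite A" "\<And>u. u \<in> A \<Longrightarrow> finite (P u)" "\<And>u. u \<in> A \<Longrightarrow> card (P u) = c"
    and "inj_on f (Sigma A P)" "f ` Sigma A P = B"
  shows "card B = c * card A"
proof -
  have "card B = card (Sigma A P)"
    using assms(4,5) card_image by blast
  also have "\<dots> = (\<Sum>u\<in>A. card (P u))"
    using assms(1,2) by (simp add: card_SigmaI)
  also have "\<dots> = c * card A"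
    using assms(3) by simp
  finally show ?thesis .
qed

definition insertion_positions :: "'a option list \<Rightarrow> nat set" where
  "insertion_positions u = {j. j \<le> length u \<and> (drop j u = [] \<or> hd (drop j u) = None)}"

definition slot_positions :: "'a option list \<Rightarrow> nat set" where
  "slot_positions u = {j. j < length u \<and> u ! j = None}"

lemma card_slot_positions: "card (slot_positions u) = count_list u None"
  by (simp add: slot_positions_def count_list_eq_length_filter length_filter_conv_card eq_commute)

lemma card_insertion_positions: "card (insertion_positions u) = Suc (count_list u None)"
proof -
  have "j \<in> insertion_positions u \<longleftrightarrow> j \<in> insert (length u) (slot_positions u)" for j
    by (cases "j < length u")
      (auto simp: insertion_positions_def slot_positions_def hd_drop_conv_nth)
  then have "insertion_positions u = insert (length u) (slot_positions u)"
    by blast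
  then show ?thesis
    using card_slot_positions[of u] by (simp add: slot_positions_def)
qed

lemma insert_block_inj:
  assumes "Some M \<notin> set (xs @ p @ ys)" "xs @ p @ Some M # ys = xs' @ p @ Some M # ys'"
  shows "xs = xs' \<and> ys = ys'"
proof -
  have "Some M \<notin> set (xs @ p)" "Some M \<notin> set ys"
    using assms(1) by auto
  moreover have "(xs @ p) @ Some M # ys = (xs' @ p) @ Some M # ys'"
    using assms(2) by simp
  ultimately have "xs @ p = xs' @ p \<and> ys = ys'"
    using append_Cons_eq_iff by metis
  then show ?thesis
    by simp
qed

lemma inj_on_insert_block:
  assumes "\<And>u. u \<in> A \<Longrightarrow> Some M \<notin> set u" "Some M \<notin> set p"
  shows "inj_on (\<lambda>(u, j). take j u @ p @ Some M # drop j u) (Sigma A insertion_positions)"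
proof (rule inj_onI, clarify)
  fix u j u' j'
  assume u: "u \<in> A" "j \<in> insertion_positions u" and u': "j' \<in> insertion_positions u'"
    and eq: "take j u @ p @ Some M # drop j u = take j' u' @ p @ Some M # drop j' u'"
  have "Some M \<notin> set (take j u @ p @ drop j u)"
    using assms u(1) by (auto dest: in_set_takeD in_set_dropD)
  note split_eq = insert_block_inj[OF this eq]
  then have "u = u'"
    by (metis append_take_drop_id)
  moreover have "j \<le> length u" "j' \<le> length u'"
    using u(2) u' by (auto simp: insertion_positions_def)
  ultimately show "u = u' \<and> j = j'"
    using split_eq by (metis length_take min.absorb2)
qed

lemma inj_on_fill_slot:
  assumes "\<And>u. u \<in> A \<Longrightarrow> Some M \<notin> set u"
  shows "inj_on (\<lambda>(u, j). take j u @ Some M # drop (Suc j) u) (Sigma A slot_positions)"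
proof (rule inj_onI, clarify)
  fix u j u' j'
  assume u: "u \<in> A" "j \<in> slot_positions u" and u': "j' \<in> slot_positions u'"
    and eq: "take j u @ Some M # drop (Suc j) u = take j' u' @ Some M # drop (Suc j') u'"
  have "Some M \<notin> set (take j u @ [] @ drop (Suc j) u)"
    using assms u(1) by (auto dest: in_set_takeD in_set_dropD)
  then have split_eq: "take j u = take j' u' \<and> drop (Suc j) u = drop (Suc j') u'"
    using insert_block_inj[where p = "[]"] eq by simp
  have "j < length u" "u ! j = None" "j' < length u'" "u' ! j' = None"
    using u(2) u' by (auto simp: slot_positions_def)
  then have "j = j'"
    using split_eq by (metis length_take min.absorb4)
  then show "u = u' \<and> j = j'"
    using split_eq \<open>j < _\<close> \<open>u ! j = None\<close> \<open>j' < _\<close> \<open>u' ! j' = None\<close>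
    by (metis id_take_nth_drop)
qed

lemma card_insert_block:
  assumes "finite A" "Some M \<notin> set p"
    and A: "\<And>u. u \<in> A \<Longrightarrow> Some M \<notin> set u \<and> int (count_list u None) = e"
    and into: "\<And>xs ys. xs @ ys \<in> A \<Longrightarrow> ys = [] \<or> hd ys = None \<Longrightarrow> xs @ p @ Some M # ys \<in> B"
    and onto: "\<And>w. w \<in> B \<Longrightarrow>
      \<exists>xs ys. w = xs @ p @ Some M # ys \<and> xs @ ys \<in> A \<and> (ys = [] \<or> hd ys = None)"
  shows "int (card B) = (e + 1) * int (card A)"
proof -
  let ?f = "\<lambda>(u, j). take j u @ p @ Some M # drop j u"
  have "card B = Suc (nat e) * card A"
  proof (rule card_image_Sigma_const[OF \<open>finite A\<close>, where f = ?f])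
    show "finite (insertion_positions u)" for u
      by (simp add: insertion_positions_def)
    show "card (insertion_positions u) = Suc (nat e)" if "u \<in> A" for u
      using A[OF that] card_insertion_positions[of u] by (metis nat_int)
    show "inj_on ?f (Sigma A insertion_positions)"
      using A by (intro inj_on_insert_block assms(2)) simp
    show "?f ` Sigma A insertion_positions = B"
    proof
      show "?f ` Sigma A insertion_positions \<subseteq> B"
      proof clarify
        fix u j assume "u \<in> A" "j \<in> insertion_positions u"
        then show "take j u @ p @ Some M # drop j u \<in> B"
          using into[of "take j u" "drop j u"] by (simp add: insertion_positions_def)
      qed
      show "B \<subseteq> ?f ` Sigma A insertion_positions"
      proof
        fix w assume "w \<in> B"
        then obtain xs ys where "w = xs @ p @ Some M # ys" "xs @ ys \<in> A" "ys = [] \<or> hd ys = None"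
          using onto by blast
        then show "w \<in> ?f ` Sigma A insertion_positions"
          by (intro image_eqI[where x = "(xs @ ys, length xs)"]) (auto simp: insertion_positions_def)
      qed
    qed
  qed
  moreover have "e \<ge> 0" if "A \<noteq> {}"
    using A that by (metis all_not_in_conv of_nat_0_le_iff)
  ultimately show ?thesis
    by (cases "A = {}") (auto simp: algebra_simps)
qed

lemma card_fill_slot:
  assumes "finite A"
    and A: "\<And>u. u \<in> A \<Longrightarrow> Some M \<notin> set u \<and> int (count_list u None) = e"
    and into: "\<And>xs ys. xs @ None # ys \<in> A \<Longrightarrow> xs @ Some M # ys \<in> B"
    and onto: "\<And>w. w \<in> B \<Longrightarrow> \<exists>xs ys. w = xs @ Some M # ys \<and> xs @ None # ys \<in> A"
  shows "int (card B) = e * int (card A)"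
proof -
  let ?f = "\<lambda>(u, j). take j u @ Some M # drop (Suc j) u"
  have "card B = nat e * card A"
  proof (rule card_image_Sigma_const[OF \<open>finite A\<close>, where f = ?f])
    show "finite (slot_positions u)" for u
      by (simp add: slot_positions_def)
    show "card (slot_positions u) = nat e" if "u \<in> A" for u
      using A[OF that] card_slot_positions[of u] by (metis nat_int)
    show "inj_on ?f (Sigma A slot_positions)"
      using A by (intro inj_on_fill_slot) simp
    show "?f ` Sigma A slot_positions = B"
    proof
      show "?f ` Sigma A slot_positions \<subseteq> B"
      proof clarify
        fix u j assume "u \<in> A" "j \<in> slot_positions u"
        then show "take j u @ Some M # drop (Suc j) u \<in> B"
          using into[of "take j u" "drop (Suc j) u"] id_take_nth_drop[of j u]
          by (simp add: slot_positions_def)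
      qed
      show "B \<subseteq> ?f ` Sigma A slot_positions"
      proof
        fix w assume "w \<in> B"
        then obtain xs ys where "w = xs @ Some M # ys" "xs @ None # ys \<in> A"
          using onto by blast
        then show "w \<in> ?f ` Sigma A slot_positions"
          by (intro image_eqI[where x = "(xs @ None # ys, length xs)"])
            (auto simp: slot_positions_def)
      qed
    qed
  qed
  moreover have "e \<ge> 0" if "A \<noteq> {}"
    using A that by (metis all_not_in_conv of_nat_0_le_iff)
  ultimately show ?thesis
    by (cases "A = {}") auto
qed

lemma partial_words_max_fresh:
  assumes "u \<in> partial_words m S"
  shows "Some (Suc m) \<notin> set u \<and> int (count_list u None) = excess S"
  using assms by (auto simp: partial_words_def Some_in_set_iff_in_entries)

lemma card_partial_words_unmarked:
  assumes "Suc m \<notin> S"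
  shows "int (card (partial_words (Suc m) S)) = (excess S + 1) * int (card (partial_words m S))"
proof (rule card_insert_block[where p = "[]" and M = "Suc m"])
  show "xs @ [] @ Some (Suc m) # ys \<in> partial_words (Suc m) S"
    if "xs @ ys \<in> partial_words m S" "ys = [] \<or> hd ys = None" for xs ys
    using insert_unmarked_max[OF that(1) refl that(2) assms] by simp
  show "\<exists>xs ys. w = xs @ [] @ Some (Suc m) # ys \<and> xs @ ys \<in> partial_words m S \<and> (ys = [] \<or> hd ys = None)"
    if "w \<in> partial_words (Suc m) S" for w
    using remove_unmarked_max[OF that assms] by (metis append_Nil)
qed (auto simp: finite_partial_words partial_words_max_fresh)

lemma card_partial_words_odd:
  assumes "odd (Suc m)" "Suc m \<notin> S"
  shows "int (card (partial_words (Suc m) (insert (Suc m) S))) =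
    (excess S + 1) * int (card (partial_words m S))"
proof (rule card_insert_block[where p = "[None]" and M = "Suc m"])
  show "xs @ [None] @ Some (Suc m) # ys \<in> partial_words (Suc m) (insert (Suc m) S)"
    if "xs @ ys \<in> partial_words m S" "ys = [] \<or> hd ys = None" for xs ys
    using insert_odd_max_with_slot[OF that(1) refl that(2) assms] by simp
  show "\<exists>xs ys. w = xs @ [None] @ Some (Suc m) # ys \<and> xs @ ys \<in> partial_words m S \<and>
      (ys = [] \<or> hd ys = None)"
    if "w \<in> partial_words (Suc m) (insert (Suc m) S)" for w
    using remove_odd_max[OF that assms] by (metis append_Cons append_Nil)
qed (auto simp: finite_partial_words partial_words_max_fresh)

lemma card_partial_words_even:
  assumes "even (Suc m)" "Suc m \<notin> S"
  shows "int (card (partial_words (Suc m) (insert (Suc m) S))) =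
    excess S * int (card (partial_words m S))"
proof (rule card_fill_slot[where M = "Suc m"])
  show "xs @ Some (Suc m) # ys \<in> partial_words (Suc m) (insert (Suc m) S)"
    if "xs @ None # ys \<in> partial_words m S" for xs ys
    using fill_slot_even_max[OF that refl assms] .
  show "\<exists>xs ys. w = xs @ Some (Suc m) # ys \<and> xs @ None # ys \<in> partial_words m S"
    if "w \<in> partial_words (Suc m) (insert (Suc m) S)" for w
    using remove_even_max[OF that assms] by metis
qed (auto simp: finite_partial_words partial_words_max_fresh)

lemma sig_vec_eq_excess:
  assumes "S \<subseteq> {1..M}"
  shows "sig_vec S M = (if M \<in> S \<and> even M then excess (S - {M}) else excess (S - {M}) + 1)"
proof -
  have "{x\<in>S. odd x \<and> x < M} = {x \<in> S - {M}. odd x}" "{x\<in>S. even x \<and> x < M} = {x \<in> S - {M}. even x}"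
    using assms by fastforce+
  then show ?thesis
    by (simp add: sig_vec_def sig_f_def sig_g_def excess_def)
qed

lemma sig_vec_remove_greater:
  assumes "i < M"
  shows "sig_vec (S - {M}) i = sig_vec S i"
proof -
  have "{x \<in> S - {M}. P x \<and> x < i} = {x\<in>S. P x \<and> x < i}" for P
    using assms by auto
  then show ?thesis
    using assms by (simp add: sig_vec_def sig_f_def sig_g_def)
qed

lemma card_partial_words_Suc:
  assumes "S \<subseteq> {1..Suc m}"
  shows "int (card (partial_words (Suc m) S)) =
    sig_vec S (Suc m) * int (card (partial_words m (S - {Suc m})))"
proof -
  consider "Suc m \<notin> S" | "Suc m \<in> S" "odd (Suc m)" | "Suc m \<in> S" "even (Suc m)"
    by blast
  then show ?thesis
  proof cases
    case 1
    then show ?thesis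
      using card_partial_words_unmarked[OF 1] sig_vec_eq_excess[OF assms] by simp
  next
    case 2
    then have "S = insert (Suc m) (S - {Suc m})"
      by blast
    then show ?thesis
      using card_partial_words_odd[of m "S - {Suc m}"] sig_vec_eq_excess[OF assms] 2 by simp
  next
    case 3
    then have "S = insert (Suc m) (S - {Suc m})"
      by blast
    then show ?thesis
      using card_partial_words_even[of m "S - {Suc m}"] sig_vec_eq_excess[OF assms] 3 by simp
  qed
qed

lemma card_partial_words:
  "S \<subseteq> {1..m} \<Longrightarrow> int (card (partial_words m S)) = (\<Prod>i=1..m. sig_vec S i)"
proof (induction m arbitrary: S)
  case 0
  then have "S = {}"
    by simp
  have "u = []" if "u \<in> partial_words 0 {}" for u
    using that map_Some_entries[of u] by (simp add: partial_words_def excess_def)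
  then have "partial_words 0 S = {[]}"
    using \<open>S = {}\<close> by (auto simp: partial_words_def excess_def)
  then show ?case
    by simp
next
  case (Suc m)
  have "S - {Suc m} \<subseteq> {1..m}"
    using Suc.prems by auto
  then have "int (card (partial_words m (S - {Suc m}))) = (\<Prod>i=1..m. sig_vec S i)"
    using Suc.IH sig_vec_remove_greater[of _ "Suc m" S] by simp
  then show ?case
    using card_partial_words_Suc[OF Suc.prems] by (simp add: mult.commute)
qed

section \<open>Permutations in one-line notation\<close>

definition one_line :: "(nat \<Rightarrow> nat) \<Rightarrow> nat \<Rightarrow> nat list" where
  "one_line \<sigma> N = map \<sigma> [1..<Suc N]"

lemma length_one_line [simp]: "length (one_line \<sigma> N) = N"
  by (simp add: one_line_def)

lemma nth_one_line: "j < N \<Longrightarrow> one_line \<sigma> N ! j = \<sigma> (Suc j)"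
  by (simp add: one_line_def del: upt_Suc)

lemma one_line_permutes:
  assumes "\<sigma> permutes {1..N}"
  shows "distinct (one_line \<sigma> N)" "set (one_line \<sigma> N) = {1..N}"
  using permutes_inj_on[OF assms] permutes_image[OF assms]
  by (simp_all add: one_line_def distinct_map atLeastLessThanSuc_atLeastAtMost del: upt_Suc)

lemma ex_Suc_less_conv: "(\<exists>j. Suc j < N \<and> P (Suc j)) \<longleftrightarrow> (\<exists>i. 1 \<le> i \<and> i < N \<and> P i)"
  by (metis One_nat_def Suc_le_D Suc_le_mono zero_le)

lemma all_Suc_less_conv: "(\<forall>j. Suc j < N \<longrightarrow> P (Suc j)) \<longleftrightarrow> (\<forall>i. 1 \<le> i \<and> i < N \<longrightarrow> P i)"
  using ex_Suc_less_conv[of N "\<lambda>i. \<not> P i"] by blast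

lemma successively_one_line:
  "successively P (one_line \<sigma> N) \<longleftrightarrow> (\<forall>i. 1 \<le> i \<and> i < N \<longrightarrow> P (\<sigma> i) (\<sigma> (Suc i)))"
  unfolding successively_conv_nth length_one_line
    all_Suc_less_conv[of N "\<lambda>i. P (\<sigma> i) (\<sigma> (Suc i))", symmetric]
  by (simp add: nth_one_line)

lemma marks_map_Some_one_line:
  "marks (map Some (one_line \<sigma> N)) = desc_tops \<sigma> N \<union> desc_bottoms \<sigma> N"
proof (rule set_eqI)
  fix z
  have "z \<in> marks (map Some (one_line \<sigma> N)) \<longleftrightarrow>
      (\<exists>j. Suc j < N \<and> z \<in> pair_marks (Some (\<sigma> (Suc j))) (Some (\<sigma> (Suc (Suc j)))))"
    unfolding marks_conv_nth length_map length_one_line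
    by (intro ex_cong1) (auto simp: nth_one_line)
  also have "\<dots> \<longleftrightarrow> (\<exists>i. 1 \<le> i \<and> i < N \<and> z \<in> pair_marks (Some (\<sigma> i)) (Some (\<sigma> (Suc i))))"
    by (rule ex_Suc_less_conv)
  also have "\<dots> \<longleftrightarrow> (\<exists>i\<in>descents \<sigma> N. z = \<sigma> i \<or> z = \<sigma> (Suc i))"
    by (auto simp: descents_def)
  also have "\<dots> \<longleftrightarrow> z \<in> desc_tops \<sigma> N \<union> desc_bottoms \<sigma> N"
    by (auto simp: desc_tops_def desc_bottoms_def)
  finally show "z \<in> marks (map Some (one_line \<sigma> N)) \<longleftrightarrow> z \<in> desc_tops \<sigma> N \<union> desc_bottoms \<sigma> N" .
qed

lemma one_line_in_partial_words_iff:
  assumes "\<sigma> permutes {1..N}" "excess S = 0"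
  shows "map Some (one_line \<sigma> N) \<in> partial_words N S \<longleftrightarrow>
    (\<forall>i\<in>descents \<sigma> N. even (\<sigma> i) \<and> odd (\<sigma> (Suc i))) \<and> desc_tops \<sigma> N \<union> desc_bottoms \<sigma> N = S"
proof -
  have "successively admissible_pair (map Some (one_line \<sigma> N)) \<longleftrightarrow>
      (\<forall>i\<in>descents \<sigma> N. even (\<sigma> i) \<and> odd (\<sigma> (Suc i)))"
    by (auto simp: successively_map successively_one_line descents_def)
  moreover have "count_list (map Some (one_line \<sigma> N)) None = 0"
    by (simp add: count_list_0_iff)
  moreover have "map Some (one_line \<sigma> N) \<noteq> [] \<longrightarrow> last (map Some (one_line \<sigma> N)) \<noteq> None"
    by (simp add: last_map)
  ultimately show ?thesis
    using assms(2) one_line_permutes[OF assms(1)]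
    by (simp add: partial_words_def marks_map_Some_one_line)
qed

lemma one_line_inj:
  assumes "\<sigma> permutes {1..N}" "\<tau> permutes {1..N}" "one_line \<sigma> N = one_line \<tau> N"
  shows "\<sigma> = \<tau>"
proof
  fix i
  show "\<sigma> i = \<tau> i"
  proof (cases "i \<in> {1..N}")
    case True
    then have "\<sigma> i = one_line \<sigma> N ! (i - 1)" "\<tau> i = one_line \<tau> N ! (i - 1)"
      by (auto simp: nth_one_line)
    then show ?thesis
      using assms(3) by simp
  next
    case False
    then show ?thesis
      using assms(1,2) by (simp add: permutes_not_in)
  qed
qed

lemma one_line_surj:
  assumes "distinct w" "set w = {1..N}"
  obtains \<sigma> where "\<sigma> permutes {1..N}" "one_line \<sigma> N = w"
proof
  have "length w = N"
    using assms distinct_card by fastforce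
  define \<sigma> where "\<sigma> i = (if i \<in> {1..N} then w ! (i - 1) else i)" for i
  have "bij_betw (\<lambda>i. i - 1) {1..N} {..<N}"
    by (rule bij_betw_byWitness[where f' = Suc]) auto
  moreover have "bij_betw ((!) w) {..<N} {1..N}"
    using bij_betw_nth[OF assms(1)] assms(2) \<open>length w = N\<close> by simp
  ultimately have "bij_betw \<sigma> {1..N} {1..N}"
    by (rule bij_betw_trans[THEN bij_betw_cong[THEN iffD1, rotated]]) (simp add: \<sigma>_def)
  then show "\<sigma> permutes {1..N}"
    by (rule bij_imp_permutes) (auto simp: \<sigma>_def)
  show "one_line \<sigma> N = w"
    by (rule nth_equalityI) (auto simp: \<open>length w = N\<close> nth_one_line \<sigma>_def)
qed

lemma card_permutes_one_line:
  "card {\<sigma>. \<sigma> permutes {1..N} \<and> P (one_line \<sigma> N)} = card {w. distinct w \<and> set w = {1..N} \<and> P w}"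
proof (rule bij_betw_same_card, rule bij_betw_imageI)
  show "inj_on (\<lambda>\<sigma>. one_line \<sigma> N) {\<sigma>. \<sigma> permutes {1..N} \<and> P (one_line \<sigma> N)}"
    by (rule inj_onI) (auto intro: one_line_inj)
  show "(\<lambda>\<sigma>. one_line \<sigma> N) ` {\<sigma>. \<sigma> permutes {1..N} \<and> P (one_line \<sigma> N)} =
      {w. distinct w \<and> set w = {1..N} \<and> P w}"
  proof
    show "(\<lambda>\<sigma>. one_line \<sigma> N) ` {\<sigma>. \<sigma> permutes {1..N} \<and> P (one_line \<sigma> N)} \<subseteq>
        {w. distinct w \<and> set w = {1..N} \<and> P w}"
      using one_line_permutes by blast
    show "{w. distinct w \<and> set w = {1..N} \<and> P w} \<subseteq>
        (\<lambda>\<sigma>. one_line \<sigma> N) ` {\<sigma>. \<sigma> permutes {1..N} \<and> P (one_line \<sigma> N)}"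
      by (auto elim!: one_line_surj)
  qed
qed

lemma card_slot_free_partial_words:
  assumes "excess S = 0"
  shows "card {w. distinct w \<and> set w = {1..m} \<and> map Some w \<in> partial_words m S} =
    card (partial_words m S)"
proof -
  have "partial_words m S = map Some ` {w. distinct w \<and> set w = {1..m} \<and> map Some w \<in> partial_words m S}"
  proof (intro equalityI subsetI)
    fix u assume "u \<in> partial_words m S"
    moreover from this have "map Some (entries u) = u"
      using assms map_Some_entries by (simp add: partial_words_def)
    moreover note \<open>excess S = 0\<close>
    ultimately show "u \<in> map Some ` {w. distinct w \<and> set w = {1..m} \<and> map Some w \<in> partial_words m S}"
      by (intro image_eqI[where x = "entries u"]) (auto simp: partial_words_def)
  qed auto
  moreover have "inj (map Some)"
    by (simp add: inj_on_def)
  ultimately show ?thesis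
    by (metis (no_types, lifting) card_image inj_on_subset subset_UNIV)
qed

lemma primary_eod_if_signature:
  assumes "\<sigma> \<in> X_set n" "is_signature n (desc_tops \<sigma> (2*n) \<union> desc_bottoms \<sigma> (2*n))"
  shows "primary_eod n \<sigma>"
  unfolding primary_eod_def
proof (intro conjI ballI impI)
  show "\<sigma> \<in> X_set n"
    by fact
  fix t b assume t: "t \<in> desc_tops \<sigma> (2*n)" and b: "b \<in> desc_bottoms \<sigma> (2*n)" and "b < t"
  have "even t" "odd b"
    using t b assms(1) by (auto simp: desc_tops_def desc_bottoms_def X_set_def)
  show "t - b \<ge> 3"
  proof (rule ccontr)
    assume "\<not> t - b \<ge> 3"
    then have "t = 2 * (t div 2)" "b = 2 * (t div 2) - 1"
      using \<open>even t\<close> \<open>odd b\<close> \<open>b < t\<close> by presburger+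
    moreover have "t div 2 \<in> {1..n}"
      using t assms(2) \<open>t = 2 * (t div 2)\<close> by (auto simp: is_signature_def)
    ultimately show False
      using t b assms(2) unfolding is_signature_def by (metis UnCI)
  qed
qed

theorem mainTheorem3:
  fixes n :: nat and S :: "nat set"
  assumes "n \<ge> 1" and "is_signature n S"
  shows "int (card {\<sigma>. primary_eod n \<sigma> \<and>
                   desc_tops \<sigma> (2*n) \<union> desc_bottoms \<sigma> (2*n) = S})
         = (\<Prod>i=1..2*n. sig_vec S i)"
proof -
  have "S \<subseteq> {1..2*n}" "excess S = 0"
    using assms(2) by (simp_all add: is_signature_def excess_def)
  have "{\<sigma>. primary_eod n \<sigma> \<and> desc_tops \<sigma> (2*n) \<union> desc_bottoms \<sigma> (2*n) = S} =
      {\<sigma>. \<sigma> permutes {1..2*n} \<and> map Some (one_line \<sigma> (2*n)) \<in> partial_words (2*n) S}"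
    using one_line_in_partial_words_iff[OF _ \<open>excess S = 0\<close>] primary_eod_if_signature assms(2)
    by (auto simp: primary_eod_def X_set_def)
  also have "card \<dots> = card {w. distinct w \<and> set w = {1..2*n} \<and> map Some w \<in> partial_words (2*n) S}"
    by (rule card_permutes_one_line)
  also have "\<dots> = card (partial_words (2*n) S)"
    by (rule card_slot_free_partial_words[OF \<open>excess S = 0\<close>])
  finally show ?thesis
    using card_partial_words[OF \<open>S \<subseteq> {1..2*n}\<close>] by simp
qed

end
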